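(* Let $\mathcal H$ be a Hilbert space and $U$ a unitary on $\mathcal H$. Let $\phi:B(\mathcal H)\to B(\mathcal H)$ be a completely positive map and let $\psi:B(\mathcal H)\to B(\mathcal H)$, $\psi(X):=U\phi(U^*X)$, have the form $$\psi(X)=\sum_{i=1}^l R_i^{\#}XR_i\quad(X\in B(\mathcal H)),\qquad R_i^{\#}=UR_i^*U^*,$$ for some $R_1,\dots,R_l\in B(\mathcal H)$. Let $p\in\mathbb N$. Then the following are equivalent: (1) $\psi^p(X)=0$ for all $X\in B(\mathcal H)$, where $\psi^p$ is the $p$-fold composition of $\psi$; (2) $R_{i_1}R_{i_2}\cdots R_{i_p}=0$ for all $i_1,\dots,i_p\in\{1,\dots,l\}$. *)

theory Defs
  imports Complex_Main
begin

text \<open>A complex Hilbert space is given by a carrier type 'h (an abelian group)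
together with a complex scalar multiplication sm and an inner product ip
(linear in the second argument, conjugate-linear in the first) such that
the induced norm is complete.\<close>

definition hnorm :: "('h \<Rightarrow> 'h \<Rightarrow> complex) \<Rightarrow> 'h \<Rightarrow> real" where
  "hnorm ip x = sqrt (Re (ip x x))"

definition hilbert_space ::
  "(complex \<Rightarrow> 'h::ab_group_add \<Rightarrow> 'h) \<Rightarrow> ('h \<Rightarrow> 'h \<Rightarrow> complex) \<Rightarrow> bool" where
  "hilbert_space sm ip \<longleftrightarrow>
     (\<forall>a x y. sm a (x + y) = sm a x + sm a y) \<and>
     (\<forall>a b x. sm (a + b) x = sm a x + sm b x) \<and>
     (\<forall>a b x. sm (a * b) x = sm a (sm b x)) \<and>
     (\<forall>x. sm 1 x = x) \<and>
     (\<forall>x y z. ip x (y + z) = ip x y + ip x z) \<and>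
     (\<forall>a x y. ip x (sm a y) = a * ip x y) \<and>
     (\<forall>x y. ip y x = cnj (ip x y)) \<and>
     (\<forall>x. Im (ip x x) = 0 \<and> Re (ip x x) \<ge> 0) \<and>
     (\<forall>x. ip x x = 0 \<longrightarrow> x = 0) \<and>
     (\<forall>X :: nat \<Rightarrow> 'h.
        (\<forall>e>0. \<exists>N. \<forall>m\<ge>N. \<forall>n\<ge>N. hnorm ip (X m - X n) < e) \<longrightarrow>
        (\<exists>L. (\<lambda>n. hnorm ip (X n - L)) \<longlonglongrightarrow> 0))"

definition bounded_op ::
  "(complex \<Rightarrow> 'h::ab_group_add \<Rightarrow> 'h) \<Rightarrow> ('h \<Rightarrow> 'h \<Rightarrow> complex) \<Rightarrow> ('h \<Rightarrow> 'h) \<Rightarrow> bool" where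
  "bounded_op sm ip T \<longleftrightarrow>
     (\<forall>x y. T (x + y) = T x + T y) \<and> (\<forall>a x. T (sm a x) = sm a (T x)) \<and>
     (\<exists>K. \<forall>x. hnorm ip (T x) \<le> K * hnorm ip x)"

definition adj :: "('h \<Rightarrow> 'h \<Rightarrow> complex) \<Rightarrow> ('h \<Rightarrow> 'h) \<Rightarrow> ('h \<Rightarrow> 'h)" where
  "adj ip T = (THE S. \<forall>x y. ip (T x) y = ip x (S y))"

definition unitary_op ::
  "(complex \<Rightarrow> 'h::ab_group_add \<Rightarrow> 'h) \<Rightarrow> ('h \<Rightarrow> 'h \<Rightarrow> complex) \<Rightarrow> ('h \<Rightarrow> 'h) \<Rightarrow> bool" where
  "unitary_op sm ip U \<longleftrightarrow> bounded_op sm ip U \<and> adj ip U \<circ> U = id \<and> U \<circ> adj ip U = id"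

text \<open>Positivity of an n x n operator matrix [X_jk] acting on H^n:
  the quadratic form sum_jk <x_j, X_jk x_k> is a nonnegative real for all x in H^n.\<close>
definition opmat_pos ::
  "('h::ab_group_add \<Rightarrow> 'h \<Rightarrow> complex) \<Rightarrow> nat \<Rightarrow> (nat \<Rightarrow> nat \<Rightarrow> 'h \<Rightarrow> 'h) \<Rightarrow> bool" where
  "opmat_pos ip n X \<longleftrightarrow>
     (\<forall>x :: nat \<Rightarrow> 'h. let q = (\<Sum>j<n. \<Sum>k<n. ip (x j) (X j k (x k))) in Im q = 0 \<and> Re q \<ge> 0)"

text \<open>Completely positive maps B(H) -> B(H): linear, B(H)-valued, and
  phi (x) id_n is positive on M_n(B(H)) for every n.\<close>
definition completely_positive ::
  "(complex \<Rightarrow> 'h::ab_group_add \<Rightarrow> 'h) \<Rightarrow> ('h \<Rightarrow> 'h \<Rightarrow> complex) \<Rightarrow> (('h \<Rightarrow> 'h) \<Rightarrow> ('h \<Rightarrow> 'h)) \<Rightarrow> bool" where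
  "completely_positive sm ip \<phi> \<longleftrightarrow>
     (\<forall>X. bounded_op sm ip X \<longrightarrow> bounded_op sm ip (\<phi> X)) \<and>
     (\<forall>X Y. bounded_op sm ip X \<longrightarrow> bounded_op sm ip Y \<longrightarrow> \<phi> (\<lambda>x. X x + Y x) = (\<lambda>x. \<phi> X x + \<phi> Y x)) \<and>
     (\<forall>a X. bounded_op sm ip X \<longrightarrow> \<phi> (\<lambda>x. sm a (X x)) = (\<lambda>x. sm a (\<phi> X x))) \<and>
     (\<forall>n X. (\<forall>j<n. \<forall>k<n. bounded_op sm ip (X j k)) \<longrightarrow> opmat_pos ip n X \<longrightarrow>
            opmat_pos ip n (\<lambda>j k. \<phi> (X j k)))"

end

theory Submission
  imports Defs "HOL-Library.Complex_Order"
begin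

(* Conjugating by U reduces psi^p = 0 to phi^p = 0 and turns the given form of psi into
   the Kraus form phi(Y) = sum_i R_i^* Y R_i.  For a word w = i_1 ... i_k put
   R_w = R_(i_1) ... R_(i_k); then <x, phi^k(Y) x> is the sum of <R_w x, Y (R_w x)> over all
   words of length k, so phi^p(1) = 0 forces R_w = 0 for every word of length p.  Conversely
   phi^p(Y) x only depends on the values of Y at the points R_w x.
   As adj is a definite description, its defining property is available only once adjoints
   are known to exist; this is the Riesz representation theorem, proved from completeness
   by minimising the norm on the affine hyperplane {f = 1}. *)

lemma foldr_comp_apply: "foldr (\<circ>) fs g x = foldr (\<circ>) fs id (g x)"
  by (induction fs arbitrary: x) auto

lemma funpow_conjugate:
  fixes \<phi> :: "('a \<Rightarrow> 'b) \<Rightarrow> 'a \<Rightarrow> 'b" and U V :: "'b \<Rightarrow> 'b"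
  assumes "\<And>x. V (U x) = x" "\<And>x. U (V x) = x"
  shows "((\<lambda>X. U \<circ> \<phi> (V \<circ> X)) ^^ k) X = U \<circ> (\<phi> ^^ k) (V \<circ> X)"
proof (induction k)
  case 0
  show ?case
    using assms by (auto simp: fun_eq_iff)
next
  case (Suc k)
  then show ?case
    using assms by (simp add: comp_def)
qed

section \<open>Geometry of a Hilbert space\<close>

locale hilbert =
  fixes sm :: "complex \<Rightarrow> 'h::ab_group_add \<Rightarrow> 'h" and ip :: "'h \<Rightarrow> 'h \<Rightarrow> complex"
  assumes hilbert: "hilbert_space sm ip"
begin

lemma
  shows sm_mult: "sm (a * b) x = sm a (sm b x)"
    and sm_one [simp]: "sm 1 x = x"
    and ip_add_right: "ip x (y + z) = ip x y + ip x z"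
    and ip_scale_right: "ip x (sm a y) = a * ip x y"
    and ip_cnj: "ip y x = cnj (ip x y)"
    and ip_self_eq_0: "ip x x = 0 \<Longrightarrow> x = 0"
  using hilbert unfolding hilbert_space_def by - (elim conjE, blast)+

lemma hilbert_complete:
  "\<forall>e>0. \<exists>N. \<forall>m\<ge>N. \<forall>n\<ge>N. hnorm ip (X m - X n) < e \<Longrightarrow>
    \<exists>L. (\<lambda>n. hnorm ip (X n - L)) \<longlonglongrightarrow> 0"
  using hilbert unfolding hilbert_space_def by (elim conjE) (erule allE, erule mp)

lemma ip_self_nonneg: "0 \<le> ip x x"
proof -
  have "Im (ip x x) = 0 \<and> 0 \<le> Re (ip x x)"
    using hilbert unfolding hilbert_space_def by blast
  then show ?thesis
    by (simp add: less_eq_complex_def)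
qed

lemma ip_add_left: "ip (x + y) z = ip x z + ip y z"
  by (metis ip_cnj ip_add_right complex_cnj_add)

lemma ip_scale_left: "ip (sm a x) y = cnj a * ip x y"
  by (metis ip_cnj ip_scale_right complex_cnj_mult)

lemma ip_zero_right [simp]: "ip x 0 = 0"
  using ip_add_right[of x 0 0] by simp

lemma ip_zero_left [simp]: "ip 0 x = 0"
  using ip_add_left[of 0 0 x] by simp

lemma ip_minus_right: "ip x (- y) = - ip x y"
  using ip_add_right[of x y "- y"] by (simp add: eq_neg_iff_add_eq_0 add.commute)

lemma ip_minus_left: "ip (- x) y = - ip x y"
  using ip_add_left[of x "- x" y] by (simp add: eq_neg_iff_add_eq_0 add.commute)

lemma ip_diff_right: "ip x (y - z) = ip x y - ip x z"
  using ip_add_right[of x y "- z"] by (simp add: ip_minus_right)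

lemma ip_diff_left: "ip (x - y) z = ip x z - ip y z"
  using ip_add_left[of x "- y" z] by (simp add: ip_minus_left)

lemma ip_sum_right: "ip x (sum f S) = (\<Sum>i\<in>S. ip x (f i))"
  by (induction S rule: infinite_finite_induct) (auto simp: ip_add_right)

lemma ip_ext: "(\<And>x. ip x a = ip x b) \<Longrightarrow> a = b"
  using ip_self_eq_0[of "a - b"] ip_diff_right[of "a - b" a b] by simp

lemma hnorm_nonneg: "0 \<le> hnorm ip x"
  using ip_self_nonneg[of x] by (simp add: hnorm_def less_eq_complex_def)

lemma ip_self_hnorm: "ip x x = complex_of_real ((hnorm ip x)\<^sup>2)"
  using ip_self_nonneg[of x] by (simp add: hnorm_def less_eq_complex_def complex_eq_iff)

lemma hnorm_square: "(hnorm ip x)\<^sup>2 = Re (ip x x)"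
  by (simp add: ip_self_hnorm)

lemma hnorm_eq_0_iff: "hnorm ip x = 0 \<longleftrightarrow> x = 0"
  using ip_self_eq_0 ip_self_hnorm[of x] by auto

lemma hnorm_minus_commute: "hnorm ip (x - y) = hnorm ip (y - x)"
  by (simp add: hnorm_def ip_diff_left ip_diff_right)

lemma Cauchy_Schwarz: "cmod (ip x y) \<le> hnorm ip x * hnorm ip y"
proof (cases "y = 0")
  case True
  then show ?thesis by (simp add: hnorm_nonneg)
next
  case False
  define N where "N = (hnorm ip y)\<^sup>2"
  have N_pos: "N > 0"
    using False hnorm_eq_0_iff[of y] hnorm_nonneg[of y] by (simp add: N_def)
  define c where "c = ip y x"
  define t where "t = c / complex_of_real N"
  define z where "z = x - sm t y"
  have "ip z z = ip x x - t * cnj c - cnj t * c + cnj t * (t * complex_of_real N)"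
    by (simp add: z_def ip_diff_left ip_diff_right ip_scale_left ip_scale_right ip_self_hnorm[of y]
        N_def[symmetric] ip_cnj[of x y] c_def[symmetric] algebra_simps)
  also have "\<dots> = ip x x - c * cnj c / complex_of_real N"
    using N_pos by (simp add: t_def field_simps)
  also have "\<dots> = ip x x - complex_of_real ((cmod c)\<^sup>2 / N)"
    using complex_norm_square[of c] by simp
  finally have "Re (ip z z) = Re (ip x x) - (cmod c)\<^sup>2 / N"
    by simp
  then have "(cmod c)\<^sup>2 / N \<le> (hnorm ip x)\<^sup>2"
    using hnorm_square[of z] hnorm_square[of x] zero_le_power2[of "hnorm ip z"] by linarith
  then have "(cmod c)\<^sup>2 \<le> (hnorm ip x * hnorm ip y)\<^sup>2"
    using N_pos by (simp add: N_def power_mult_distrib field_simps)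
  then have "cmod c \<le> hnorm ip x * hnorm ip y"
    by (rule power2_le_imp_le) (simp add: hnorm_nonneg)
  then show ?thesis
    by (simp add: c_def ip_cnj[of x y])
qed

lemma hnorm_triangle: "hnorm ip (x + y) \<le> hnorm ip x + hnorm ip y"
proof -
  have "Re (ip x y + ip y x) = 2 * Re (ip x y)"
    by (simp add: ip_cnj[of y x])
  also have "\<dots> \<le> 2 * (hnorm ip x * hnorm ip y)"
    using complex_Re_le_cmod[of "ip x y"] Cauchy_Schwarz[of x y] by simp
  finally have "(hnorm ip (x + y))\<^sup>2 \<le> (hnorm ip x + hnorm ip y)\<^sup>2"
    by (simp add: hnorm_square ip_add_left ip_add_right power2_sum)
  then show ?thesis
    by (rule power2_le_imp_le) (simp add: hnorm_nonneg)
qed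

lemma parallelogram:
  "(hnorm ip (x - y))\<^sup>2 + (hnorm ip (x + y))\<^sup>2 = 2 * (hnorm ip x)\<^sup>2 + 2 * (hnorm ip y)\<^sup>2"
  by (simp add: hnorm_square ip_add_left ip_add_right ip_diff_left ip_diff_right)

section \<open>Riesz representation and adjoints\<close>

lemma minimizing_sequence_Cauchy:
  assumes midpoint: "\<And>m n. 4 * D \<le> (hnorm ip (X m + X n))\<^sup>2"
    and near: "\<And>n. (hnorm ip (X n))\<^sup>2 < D + 1 / (real n + 1)"
  shows "\<forall>e>0. \<exists>N. \<forall>m\<ge>N. \<forall>n\<ge>N. hnorm ip (X m - X n) < e"
proof (intro allI impI)
  fix e :: real
  assume "e > 0"
  obtain N :: nat where "4 / e\<^sup>2 < real N"
    using reals_Archimedean2 by blast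
  with \<open>e > 0\<close> have "4 < real N * e\<^sup>2"
    by (simp add: divide_less_eq)
  moreover have "0 < e\<^sup>2"
    using \<open>e > 0\<close> by simp
  ultimately have "4 < (real N + 1) * e\<^sup>2"
    by (simp only: distrib_right mult_1_left)
  then have N: "4 / (real N + 1) < e\<^sup>2"
    by (simp add: divide_less_eq mult.commute)
  show "\<exists>N. \<forall>m\<ge>N. \<forall>n\<ge>N. hnorm ip (X m - X n) < e"
  proof (intro exI allI impI)
    fix m n
    assume "N \<le> m" "N \<le> n"
    then have "2 / (real m + 1) + 2 / (real n + 1) \<le> 4 / (real N + 1)"
      using frac_le[of 2 2 "real N + 1" "real m + 1"] frac_le[of 2 2 "real N + 1" "real n + 1"]
      by simp
    moreover have "(hnorm ip (X m - X n))\<^sup>2 \<le> 2 / (real m + 1) + 2 / (real n + 1)"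
      using parallelogram[of "X m" "X n"] midpoint[of m n] near[of m] near[of n] by simp
    ultimately have "(hnorm ip (X m - X n))\<^sup>2 < e\<^sup>2"
      using N by linarith
    then show "hnorm ip (X m - X n) < e"
      by (rule power2_less_imp_less) (use \<open>e > 0\<close> in simp)
  qed
qed

lemma hnorm_limit_le:
  assumes "(\<lambda>n. hnorm ip (X n - L)) \<longlonglongrightarrow> 0"
    and "\<And>n. (hnorm ip (X n))\<^sup>2 < D + 1 / (real n + 1)"
  shows "hnorm ip L \<le> sqrt D"
proof -
  have "hnorm ip L \<le> sqrt (D + 1 / (real n + 1)) + hnorm ip (X n - L)" for n
  proof -
    have "hnorm ip (X n) \<le> sqrt (D + 1 / (real n + 1))"
      using assms(2)[of n] by (intro real_le_rsqrt) simp
    then show ?thesis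
      using hnorm_triangle[of "X n" "L - X n"] hnorm_minus_commute[of L "X n"] by simp
  qed
  moreover have "(\<lambda>n. 1 / (real n + 1)) \<longlonglongrightarrow> 0"
    using LIMSEQ_inverse_real_of_nat by (simp add: inverse_eq_divide add.commute)
  then have "(\<lambda>n. sqrt (D + 1 / (real n + 1)) + hnorm ip (X n - L)) \<longlonglongrightarrow> sqrt (D + 0) + 0"
    by (intro tendsto_add tendsto_real_sqrt tendsto_const assms(1))
  ultimately show ?thesis
    using LIMSEQ_le_const[of _ "sqrt (D + 0) + 0" "hnorm ip L"] by fastforce
qed

context
  fixes f :: "'h \<Rightarrow> complex" and K :: real
  assumes f_add: "\<And>x y. f (x + y) = f x + f y"
    and f_scale: "\<And>a x. f (sm a x) = a * f x"
    and f_bounded: "\<And>x. cmod (f x) \<le> K * hnorm ip x"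
begin

lemma f_diff: "f (x - y) = f x - f y"
  using f_add[of "x - y" y] by simp

lemma limit_in_hyperplane:
  assumes "\<And>n. f (X n) = 1" and "(\<lambda>n. hnorm ip (X n - L)) \<longlonglongrightarrow> 0"
  shows "f L = 1"
proof -
  have "cmod (1 - f L) \<le> K * hnorm ip (X n - L)" for n
    using f_bounded[of "X n - L"] assms(1)[of n] by (simp add: f_diff)
  moreover have "(\<lambda>n. K * hnorm ip (X n - L)) \<longlonglongrightarrow> K * 0"
    by (intro tendsto_mult tendsto_const assms(2))
  ultimately show ?thesis
    using LIMSEQ_le_const[of _ "K * 0" "cmod (1 - f L)"] by fastforce
qed

lemma hyperplane_min_norm:
  assumes "f x\<^sub>0 = 1"
  obtains L where "f L = 1" "\<And>x. f x = 1 \<Longrightarrow> hnorm ip L \<le> hnorm ip x"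
proof -
  define Q where "Q = (\<lambda>x. (hnorm ip x)\<^sup>2) ` {x. f x = 1}"
  define D where "D = Inf Q"
  have "Q \<noteq> {}" "bdd_below Q"
    using assms by (auto simp: Q_def intro: bdd_belowI[of _ 0])
  then have D_le: "D \<le> (hnorm ip x)\<^sup>2" if "f x = 1" for x
    using that by (auto simp: D_def Q_def intro: cInf_lower)
  have "\<exists>x. f x = 1 \<and> (hnorm ip x)\<^sup>2 < D + 1 / (real n + 1)" for n :: nat
    using cInf_lessD[OF \<open>Q \<noteq> {}\<close>, of "D + 1 / (real n + 1)"] by (auto simp: D_def Q_def)
  then obtain X where X: "\<And>n. f (X n) = 1" and near: "\<And>n. (hnorm ip (X n))\<^sup>2 < D + 1 / (real n + 1)"
    by metis
  have "4 * D \<le> (hnorm ip (X m + X n))\<^sup>2" for m n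
  proof -
    have "X m + X n = sm 2 (sm (1/2) (X m + X n))"
      by (simp flip: sm_mult)
    moreover have "D \<le> (hnorm ip (sm (1/2) (X m + X n)))\<^sup>2"
      using X by (intro D_le) (simp add: f_scale f_add)
    ultimately show ?thesis
      by (simp add: hnorm_square ip_scale_left ip_scale_right)
  qed
  then obtain L where L: "(\<lambda>n. hnorm ip (X n - L)) \<longlonglongrightarrow> 0"
    using hilbert_complete minimizing_sequence_Cauchy near by blast
  have "hnorm ip L \<le> hnorm ip x" if "f x = 1" for x
  proof -
    have "hnorm ip L \<le> sqrt D"
      using L near by (rule hnorm_limit_le)
    also have "\<dots> \<le> hnorm ip x"
      using real_sqrt_le_mono[OF D_le[OF that]] hnorm_nonneg[of x] by simp
    finally show ?thesis .
  qed
  moreover have "f L = 1"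
    using X L by (rule limit_in_hyperplane)
  ultimately show ?thesis
    using that by blast
qed

lemma min_norm_orthogonal_kernel:
  assumes "f L = 1" and L_min: "\<And>x. f x = 1 \<Longrightarrow> hnorm ip L \<le> hnorm ip x" and "f y = 0"
  shows "ip L y = 0"
proof -
  define c where "c = ip L y"
  define s where "s = 1 / ((hnorm ip y)\<^sup>2 + 1)"
  have "0 < (hnorm ip y)\<^sup>2 + 1"
    by (intro add_nonneg_pos) simp_all
  then have s_pos: "s > 0" and s_small: "s * (hnorm ip y)\<^sup>2 < 1"
    by (simp_all add: s_def field_simps)
  (* moving L by t y within the hyperplane changes |L|\<^sup>2 by s |c|\<^sup>2 (s |y|\<^sup>2 - 2) < 0 unless c = 0 *)
  define t where "t = - (complex_of_real s * cnj c)"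
  have "ip (L + sm t y) (L + sm t y)
      = ip L L + complex_of_real (s * (cmod c)\<^sup>2 * (s * (hnorm ip y)\<^sup>2 - 2))"
    using complex_norm_square[of c]
    by (simp add: t_def ip_add_left ip_add_right ip_scale_left ip_scale_right ip_self_hnorm[of y]
        ip_cnj[of y L] c_def[symmetric] algebra_simps power2_eq_square)
  then have "(hnorm ip (L + sm t y))\<^sup>2 = (hnorm ip L)\<^sup>2 + s * (cmod c)\<^sup>2 * (s * (hnorm ip y)\<^sup>2 - 2)"
    by (simp add: hnorm_square)
  moreover have "hnorm ip L \<le> hnorm ip (L + sm t y)"
    using assms by (intro L_min) (simp add: f_add f_scale)
  then have "(hnorm ip L)\<^sup>2 \<le> (hnorm ip (L + sm t y))\<^sup>2"
    by (simp add: power_mono hnorm_nonneg)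
  ultimately have "0 \<le> s * (cmod c)\<^sup>2 * (s * (hnorm ip y)\<^sup>2 - 2)"
    by simp
  with s_pos s_small have "(cmod c)\<^sup>2 \<le> 0"
    by (smt (verit) mult_pos_neg zero_less_mult_iff)
  then show ?thesis
    by (simp add: c_def)
qed

lemma Riesz_representation: "\<exists>z. \<forall>x. f x = ip z x"
proof (cases "\<exists>x. f x \<noteq> 0")
  case False
  then show ?thesis
    by (intro exI[of _ 0]) simp
next
  case True
  then obtain x\<^sub>0 where "f x\<^sub>0 \<noteq> 0"
    by blast
  then have "f (sm (1 / f x\<^sub>0) x\<^sub>0) = 1"
    by (simp add: f_scale)
  then obtain L where L: "f L = 1" "\<And>x. f x = 1 \<Longrightarrow> hnorm ip L \<le> hnorm ip x"
    using hyperplane_min_norm by blast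
  define r where "r = (hnorm ip L)\<^sup>2"
  have "r > 0"
    using L(1) hnorm_eq_0_iff[of L] hnorm_nonneg[of L] f_diff[of 0 0] by (auto simp: r_def)
  have "f x = ip (sm (complex_of_real (1 / r)) L) x" for x
  proof -
    have "ip L (x - sm (f x) L) = 0"
      using L by (intro min_norm_orthogonal_kernel) (simp_all add: f_diff f_scale)
    then have "ip L x = f x * complex_of_real r"
      by (simp add: ip_diff_right ip_scale_right ip_self_hnorm r_def)
    then show ?thesis
      using \<open>r > 0\<close> by (simp add: ip_scale_left)
  qed
  then show ?thesis
    by blast
qed

end

lemma bounded_op_bound:
  assumes "bounded_op sm ip T"
  obtains K where "K \<ge> 0" "\<And>x. hnorm ip (T x) \<le> K * hnorm ip x"
proof -
  obtain K where K: "\<And>x. hnorm ip (T x) \<le> K * hnorm ip x"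
    using assms unfolding bounded_op_def by blast
  have "hnorm ip (T x) \<le> max K 0 * hnorm ip x" for x
    using K[of x] hnorm_nonneg[of x] by (meson order_trans max.cobounded1 mult_right_mono)
  then show ?thesis
    by (intro that[of "max K 0"]) auto
qed

lemma bounded_op_add: "bounded_op sm ip T \<Longrightarrow> T (x + y) = T x + T y"
  unfolding bounded_op_def by blast

lemma bounded_op_scale: "bounded_op sm ip T \<Longrightarrow> T (sm a x) = sm a (T x)"
  unfolding bounded_op_def by blast

lemma bounded_op_zero: "bounded_op sm ip T \<Longrightarrow> T 0 = 0"
  using bounded_op_add[of T 0 0] by simp

lemma bounded_op_sum: "bounded_op sm ip T \<Longrightarrow> T (sum f S) = (\<Sum>i\<in>S. T (f i))"
  by (induction S rule: infinite_finite_induct) (auto simp: bounded_op_add bounded_op_zero)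

lemma bounded_op_id: "bounded_op sm ip id"
  unfolding bounded_op_def by (auto intro: exI[of _ 1])

lemma bounded_op_comp:
  assumes "bounded_op sm ip S" "bounded_op sm ip T"
  shows "bounded_op sm ip (S \<circ> T)"
proof -
  obtain K\<^sub>S where "K\<^sub>S \<ge> 0" "\<And>x. hnorm ip (S x) \<le> K\<^sub>S * hnorm ip x"
    using bounded_op_bound[OF assms(1)] by blast
  moreover obtain K\<^sub>T where "\<And>x. hnorm ip (T x) \<le> K\<^sub>T * hnorm ip x"
    using bounded_op_bound[OF assms(2)] by blast
  ultimately have "hnorm ip (S (T x)) \<le> (K\<^sub>S * K\<^sub>T) * hnorm ip x" for x
    by (metis order_trans mult.assoc mult_left_mono)
  then show ?thesis
    using assms unfolding bounded_op_def by auto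
qed

lemma adjoint_exists:
  assumes T: "bounded_op sm ip T"
  obtains S where "\<And>x y. ip (T x) y = ip x (S y)"
proof -
  obtain K where K: "K \<ge> 0" "\<And>x. hnorm ip (T x) \<le> K * hnorm ip x"
    using bounded_op_bound[OF T] by blast
  have "\<exists>z. \<forall>x. ip y (T x) = ip z x" for y
  proof (rule Riesz_representation)
    show "cmod (ip y (T x)) \<le> (hnorm ip y * K) * hnorm ip x" for x
      using Cauchy_Schwarz[of y "T x"] K(2)[of x] hnorm_nonneg[of y]
      by (metis order_trans mult.assoc mult_left_mono)
  qed (simp_all add: bounded_op_add[OF T] bounded_op_scale[OF T] ip_add_right ip_scale_right)
  then obtain S where "\<And>y x. ip y (T x) = ip (S y) x"
    by metis
  then show ?thesis
    by (metis that ip_cnj)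
qed

lemma adj_eq:
  assumes T: "bounded_op sm ip T"
  shows "ip (T x) y = ip x (adj ip T y)"
proof -
  obtain S where S: "\<And>x y. ip (T x) y = ip x (S y)"
    using adjoint_exists[OF T] by blast
  have "adj ip T = S"
    unfolding adj_def
  proof (rule the_equality)
    show "S' = S" if "\<forall>x y. ip (T x) y = ip x (S' y)" for S'
      using that S by (metis ip_ext ext)
  qed (use S in blast)
  with S show ?thesis
    by simp
qed

lemma bounded_op_adj:
  assumes T: "bounded_op sm ip T"
  shows "bounded_op sm ip (adj ip T)"
proof -
  let ?A = "adj ip T"
  obtain K where K: "K \<ge> 0" "\<And>x. hnorm ip (T x) \<le> K * hnorm ip x"
    using bounded_op_bound[OF T] by blast
  have "hnorm ip (?A y) \<le> K * hnorm ip y" for y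
  proof (cases "?A y = 0")
    case True
    then show ?thesis
      using K hnorm_nonneg[of y] by (simp add: hnorm_def)
  next
    case False
    then have pos: "hnorm ip (?A y) > 0"
      using hnorm_eq_0_iff hnorm_nonneg by (metis less_eq_real_def)
    have "(hnorm ip (?A y))\<^sup>2 = Re (ip (T (?A y)) y)"
      by (simp add: hnorm_square adj_eq[OF T])
    also have "\<dots> \<le> hnorm ip (T (?A y)) * hnorm ip y"
      using complex_Re_le_cmod Cauchy_Schwarz order_trans by blast
    also have "\<dots> \<le> K * hnorm ip (?A y) * hnorm ip y"
      using K(2) by (simp add: mult_right_mono hnorm_nonneg)
    finally show ?thesis
      using pos by (simp add: power2_eq_square)
  qed
  moreover have "?A (y + z) = ?A y + ?A z" "?A (sm a y) = sm a (?A y)" for a y z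
    by (rule ip_ext, simp add: adj_eq[OF T, symmetric] ip_add_right ip_scale_right)+
  ultimately show ?thesis
    unfolding bounded_op_def by blast
qed

lemma unitary_op_inverse:
  assumes "unitary_op sm ip U"
  shows "adj ip U (U x) = x" "U (adj ip U x) = x"
  using assms unfolding unitary_op_def by (metis comp_apply id_apply)+

lemma conjugate_nilpotent_iff:
  fixes \<phi> :: "('h \<Rightarrow> 'h) \<Rightarrow> 'h \<Rightarrow> 'h"
  assumes "unitary_op sm ip U"
  shows "(\<forall>X. bounded_op sm ip X \<longrightarrow> ((\<lambda>X. U \<circ> \<phi> (adj ip U \<circ> X)) ^^ p) X = (\<lambda>_. 0)) \<longleftrightarrow>
         (\<forall>Y. bounded_op sm ip Y \<longrightarrow> (\<phi> ^^ p) Y = (\<lambda>_. 0))"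
proof -
  note inverse = unitary_op_inverse[OF assms]
  have U: "bounded_op sm ip U" and V: "bounded_op sm ip (adj ip U)"
    using assms bounded_op_adj unfolding unitary_op_def by blast+
  have power: "((\<lambda>X. U \<circ> \<phi> (adj ip U \<circ> X)) ^^ p) X = U \<circ> (\<phi> ^^ p) (adj ip U \<circ> X)" for X
    by (rule funpow_conjugate) (simp_all add: inverse)
  have U_comp_eq_0: "U \<circ> Z = (\<lambda>_. 0) \<longleftrightarrow> Z = (\<lambda>_. 0)" for Z :: "'h \<Rightarrow> 'h"
    using bounded_op_zero[OF U] bounded_op_zero[OF V] inverse by (metis comp_apply)
  show ?thesis
  proof (intro iffI allI impI)
    fix Y
    assume "\<forall>X. bounded_op sm ip X \<longrightarrow> ((\<lambda>X. U \<circ> \<phi> (adj ip U \<circ> X)) ^^ p) X = (\<lambda>_. 0)"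
      and "bounded_op sm ip Y"
    then have "U \<circ> (\<phi> ^^ p) (adj ip U \<circ> (U \<circ> Y)) = (\<lambda>_. 0)"
      using bounded_op_comp[OF U] by (simp only: power)
    moreover have "adj ip U \<circ> (U \<circ> Y) = Y"
      by (simp add: fun_eq_iff inverse)
    ultimately have "U \<circ> (\<phi> ^^ p) Y = (\<lambda>_. 0)"
      by simp
    then show "(\<phi> ^^ p) Y = (\<lambda>_. 0)"
      using U_comp_eq_0 by blast
  next
    fix X
    assume "\<forall>Y. bounded_op sm ip Y \<longrightarrow> (\<phi> ^^ p) Y = (\<lambda>_. 0)" and "bounded_op sm ip X"
    then show "((\<lambda>X. U \<circ> \<phi> (adj ip U \<circ> X)) ^^ p) X = (\<lambda>_. 0)"
      using bounded_op_comp[OF V] by (simp add: power U_comp_eq_0)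
  qed
qed

lemma kraus_form_of_conjugate:
  fixes \<phi> :: "('h \<Rightarrow> 'h) \<Rightarrow> 'h \<Rightarrow> 'h" and R :: "'i \<Rightarrow> 'h \<Rightarrow> 'h"
  assumes U: "unitary_op sm ip U" and "bounded_op sm ip Y"
    and conj_form: "\<forall>X. bounded_op sm ip X \<longrightarrow>
      U \<circ> \<phi> (adj ip U \<circ> X) = (\<lambda>x. \<Sum>i\<in>I. (U \<circ> adj ip (R i) \<circ> adj ip U \<circ> X \<circ> R i) x)"
  shows "\<phi> Y = (\<lambda>x. \<Sum>i\<in>I. adj ip (R i) (Y (R i x)))"
proof
  fix x
  note inverse = unitary_op_inverse[OF U]
  have U_bounded: "bounded_op sm ip U"
    using U unfolding unitary_op_def by blast
  then have "bounded_op sm ip (U \<circ> Y)"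
    using assms(2) bounded_op_comp by blast
  then have "U \<circ> \<phi> (adj ip U \<circ> (U \<circ> Y))
      = (\<lambda>x. \<Sum>i\<in>I. (U \<circ> adj ip (R i) \<circ> adj ip U \<circ> (U \<circ> Y) \<circ> R i) x)"
    using conj_form by blast
  then have "U (\<phi> Y x) = (\<Sum>i\<in>I. U (adj ip (R i) (Y (R i x))))"
    by (simp add: comp_def inverse fun_eq_iff)
  also have "\<dots> = U (\<Sum>i\<in>I. adj ip (R i) (Y (R i x)))"
    by (simp add: bounded_op_sum[OF U_bounded])
  finally show "\<phi> Y x = (\<Sum>i\<in>I. adj ip (R i) (Y (R i x)))"
    by (metis inverse(1))
qed

end

section \<open>Nilpotent Kraus maps\<close>

locale kraus_map = hilbert +
  fixes \<phi> :: "('h::ab_group_add \<Rightarrow> 'h) \<Rightarrow> 'h \<Rightarrow> 'h" and I :: "'i set" and R :: "'i \<Rightarrow> 'h \<Rightarrow> 'h"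
  assumes finite_I: "finite I"
    and bounded_R: "i \<in> I \<Longrightarrow> bounded_op sm ip (R i)"
    and bounded_map: "bounded_op sm ip Y \<Longrightarrow> bounded_op sm ip (\<phi> Y)"
    and kraus_form: "bounded_op sm ip Y \<Longrightarrow> \<phi> Y = (\<lambda>x. \<Sum>i\<in>I. adj ip (R i) (Y (R i x)))"
begin

abbreviation words :: "nat \<Rightarrow> 'i list set"
  where "words k \<equiv> {w. set w \<subseteq> I \<and> length w = k}"

abbreviation word_op :: "'i list \<Rightarrow> 'h \<Rightarrow> 'h"
  where "word_op w \<equiv> foldr (\<circ>) (map R w) id"

lemma quadratic_form_power:
  assumes "bounded_op sm ip Y"
  shows "ip x ((\<phi> ^^ k) Y x) = (\<Sum>w\<in>words k. ip (word_op w x) (Y (word_op w x)))"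
  using assms
proof (induction k arbitrary: Y)
  case 0
  have "words 0 = {[]}"
    by auto
  then show ?case
    by simp
next
  case (Suc k)
  define g where "g = (\<lambda>w. ip (word_op w x) (Y (word_op w x)))"
  have "ip x ((\<phi> ^^ Suc k) Y x) = ip x ((\<phi> ^^ k) (\<phi> Y) x)"
    by (simp only: funpow_Suc_right comp_apply)
  also have "\<dots> = (\<Sum>w\<in>words k. ip (word_op w x) (\<phi> Y (word_op w x)))"
    by (rule Suc.IH[OF bounded_map[OF Suc.prems]])
  also have "\<dots> = (\<Sum>w\<in>words k. \<Sum>i\<in>I. g (i # w))"
    using Suc.prems by (intro sum.cong) (auto simp: g_def kraus_form ip_sum_right adj_eq bounded_R)
  also have "\<dots> = (\<Sum>(w, i)\<in>words k \<times> I. g (i # w))"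
    by (rule sum.cartesian_product)
  also have "\<dots> = sum g (words (Suc k))"
    unfolding lists_length_Suc_eq by (rule sym, rule sum.reindex_cong[OF inj_split_Cons]) auto
  finally show ?case
    unfolding g_def .
qed

lemma power_apply_eq_0_if_words_vanish:
  assumes "bounded_op sm ip Y" and "\<And>w. w \<in> words k \<Longrightarrow> word_op w x = 0"
  shows "(\<phi> ^^ k) Y x = 0"
  using assms(2)
proof (induction k arbitrary: x)
  case 0
  then show ?case
    using bounded_op_zero[OF assms(1)] by simp
next
  case (Suc k)
  have "(\<phi> ^^ k) Y (R i x) = 0" if "i \<in> I" for i
  proof (rule Suc.IH)
    fix w
    assume "w \<in> words k"
    then have "word_op (w @ [i]) x = 0"
      using that by (intro Suc.prems) auto
    then show "word_op w (R i x) = 0"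
      by (simp add: foldr_comp_apply[of _ "R i"])
  qed
  moreover have "bounded_op sm ip ((\<phi> ^^ k) Y)"
    using assms(1) by (induction k) (simp_all add: bounded_map)
  ultimately show ?case
    by (simp add: kraus_form bounded_op_zero bounded_op_adj bounded_R)
qed

theorem nilpotent_iff_words_vanish:
  "(\<forall>Y. bounded_op sm ip Y \<longrightarrow> (\<phi> ^^ p) Y = (\<lambda>_. 0)) \<longleftrightarrow> (\<forall>w\<in>words p. word_op w = (\<lambda>_. 0))"
proof
  assume nilpotent: "\<forall>Y. bounded_op sm ip Y \<longrightarrow> (\<phi> ^^ p) Y = (\<lambda>_. 0)"
  show "\<forall>w\<in>words p. word_op w = (\<lambda>_. 0)"
  proof (intro ballI ext)
    fix w x
    assume "w \<in> words p"
    have "(\<Sum>v\<in>words p. ip (word_op v x) (word_op v x)) = 0"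
      using quadratic_form_power[OF bounded_op_id, of x p] nilpotent bounded_op_id by simp
    then have "ip (word_op w x) (word_op w x) = 0"
      using \<open>w \<in> words p\<close> finite_lists_length_eq[OF finite_I]
      by (subst (asm) sum_nonneg_eq_0_iff) (auto simp: ip_self_nonneg)
    then show "word_op w x = 0"
      by (rule ip_self_eq_0)
  qed
next
  assume "\<forall>w\<in>words p. word_op w = (\<lambda>_. 0)"
  then show "\<forall>Y. bounded_op sm ip Y \<longrightarrow> (\<phi> ^^ p) Y = (\<lambda>_. 0)"
    by (auto intro!: ext power_apply_eq_0_if_words_vanish)
qed

end

theorem proposition4p2:
  fixes sm :: "complex \<Rightarrow> 'h::ab_group_add \<Rightarrow> 'h"
    and ip :: "'h \<Rightarrow> 'h \<Rightarrow> complex"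
    and U :: "'h \<Rightarrow> 'h"
    and \<phi> \<psi> :: "('h \<Rightarrow> 'h) \<Rightarrow> ('h \<Rightarrow> 'h)"
    and R :: "nat \<Rightarrow> 'h \<Rightarrow> 'h"
    and l p :: nat
  assumes H: "hilbert_space sm ip"
    and U: "unitary_op sm ip U"
    and phi: "completely_positive sm ip \<phi>"
    and psi_def: "\<psi> = (\<lambda>X. U \<circ> \<phi> (adj ip U \<circ> X))"
    and R_bdd: "\<forall>i\<in>{1..l}. bounded_op sm ip (R i)"
    and psi_form: "\<forall>X. bounded_op sm ip X \<longrightarrow>
        \<psi> X = (\<lambda>x. \<Sum>i\<in>{1..l}. (U \<circ> adj ip (R i) \<circ> adj ip U \<circ> X \<circ> R i) x)"
    and p: "p \<ge> 1"
  shows "(\<forall>X. bounded_op sm ip X \<longrightarrow> (\<psi> ^^ p) X = (\<lambda>_. 0)) \<longleftrightarrow>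
         (\<forall>is. length is = p \<and> set is \<subseteq> {1..l} \<longrightarrow> foldr (\<circ>) (map R is) id = (\<lambda>_. 0))"
proof -
  interpret hilbert sm ip
    by (rule hilbert.intro) (fact H)
  interpret kraus_map sm ip \<phi> "{1..l}" R
  proof
    fix Y
    assume "bounded_op sm ip Y"
    then show "bounded_op sm ip (\<phi> Y)"
      using phi unfolding completely_positive_def by blast
    show "\<phi> Y = (\<lambda>x. \<Sum>i\<in>{1..l}. adj ip (R i) (Y (R i x)))"
      using kraus_form_of_conjugate[OF U \<open>bounded_op sm ip Y\<close>] psi_form unfolding psi_def by blast
  qed (use R_bdd in auto)
  show ?thesis
    unfolding psi_def conjugate_nilpotent_iff[OF U] nilpotent_iff_words_vanish by (auto simp: conj_commute)
qed

end
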